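(* Let $a\in[0,1]$ and, for $x\in(0,1)$, $$f(x):=\pi^2-36\big(\arcsin\tfrac x2\big)^2,\qquad g(x):=9(1-x^2).$$ Then $\mathrm{ARE}_{R,T}=f/g$ on $(0,1)$. Let $b:=\frac fg(a)$ and $c:=\big(\frac fg\big)'(a)$ (for $a=1$ these mean the one-sided limits at $1-$), and define $f_0(x):=f(x)-bg(x)-c(x-a)g(x)$, $g_0(x):=(x-a)^2g(x)$, and for $i=1,2,3,4$, $f_i:=a_if_{i-1}'$, $g_i:=a_ig_{i-1}'$, $r_i:=f_i/g_i$, where $$a_1(x)=\sqrt{4-x^2},\quad a_2(x)=\frac{\sqrt{4-x^2}}{2-x^2},\quad a_3(x)=\frac{(2-x^2)^2}{50-29x^2+9x^4},\quad a_4(x)=\frac{(50-29x^2+9x^4)^2}{2-x^2}.$$ Then on $(0,1)$: $r_4$ is strictly increasing, $f_4<0$ and $g_4<0$.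
   Context: $\mathrm{ARE}_{R,T}(\rho_0)$ is the Pitman asymptotic relative efficiency of Pearson's correlation $R$ to Kendall's $T$ for testing $H_0:\rho=\rho_0$ with i.i.d. bivariate normal data of correlation $\rho$; it equals $\frac{\sigma_T^2(\rho_0)\mu_R'(\rho_0)^2}{\sigma_R^2(\rho_0)\mu_T'(\rho_0)^2}$ with $\mu_R(\rho)=\rho$, $\sigma_R^2(\rho)=(1-\rho^2)^2$, $\mu_T(\rho)=\frac2\pi\arcsin\rho$, $\sigma_T^2(\rho)=\frac49-\frac{16}{\pi^2}(\arcsin\frac\rho2)^2$. *)

theory Defs
  imports "HOL-Analysis.Analysis"
begin

text \<open>Moments of Pearson's R and Kendall's T under bivariate normal data.\<close>
definition muR :: "real \<Rightarrow> real" where "muR \<rho> = \<rho>"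
definition sigR2 :: "real \<Rightarrow> real" where "sigR2 \<rho> = (1 - \<rho>^2)^2"
definition muT :: "real \<Rightarrow> real" where "muT \<rho> = 2 / pi * arcsin \<rho>"
definition sigT2 :: "real \<Rightarrow> real" where
  "sigT2 \<rho> = 4/9 - 16 / pi^2 * (arcsin (\<rho>/2))^2"

definition ARE_RT :: "real \<Rightarrow> real" where
  "ARE_RT \<rho>0 = sigT2 \<rho>0 * (deriv muR \<rho>0)^2 / (sigR2 \<rho>0 * (deriv muT \<rho>0)^2)"

definition fA :: "real \<Rightarrow> real" where "fA x = pi^2 - 36 * (arcsin (x/2))^2"
definition gA :: "real \<Rightarrow> real" where "gA x = 9 * (1 - x^2)"

definition bcoef :: "real \<Rightarrow> real" where
  "bcoef a = (if a = 1 then Lim (at_left 1) (\<lambda>x. fA x / gA x) else fA a / gA a)"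
definition ccoef :: "real \<Rightarrow> real" where
  "ccoef a = (if a = 1 then Lim (at_left 1) (deriv (\<lambda>x. fA x / gA x))
              else deriv (\<lambda>x. fA x / gA x) a)"

definition f0 :: "real \<Rightarrow> real \<Rightarrow> real" where
  "f0 a x = fA x - bcoef a * gA x - ccoef a * (x - a) * gA x"
definition g0 :: "real \<Rightarrow> real \<Rightarrow> real" where
  "g0 a x = (x - a)^2 * gA x"

fun acoef :: "nat \<Rightarrow> real \<Rightarrow> real" where
  "acoef (Suc 0) x = sqrt (4 - x^2)"
| "acoef (Suc (Suc 0)) x = sqrt (4 - x^2) / (2 - x^2)"
| "acoef (Suc (Suc (Suc 0))) x = (2 - x^2)^2 / (50 - 29*x^2 + 9*x^4)"
| "acoef (Suc (Suc (Suc (Suc 0)))) x = (50 - 29*x^2 + 9*x^4)^2 / (2 - x^2)"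
| "acoef _ x = 1"

primrec fI :: "real \<Rightarrow> nat \<Rightarrow> real \<Rightarrow> real" where
  "fI a 0 = f0 a"
| "fI a (Suc i) = (\<lambda>x. acoef (Suc i) x * deriv (fI a i) x)"

primrec gI :: "real \<Rightarrow> nat \<Rightarrow> real \<Rightarrow> real" where
  "gI a 0 = g0 a"
| "gI a (Suc i) = (\<lambda>x. acoef (Suc i) x * deriv (gI a i) x)"

definition rI :: "real \<Rightarrow> nat \<Rightarrow> real \<Rightarrow> real" where
  "rI a i x = fI a i x / gI a i x"

end

theory Submission
  imports Defs
begin

text \<open>
  Each operator \<open>a\<^sub>i \<cdot> d/dx\<close> clears one layer of \<open>(f\<^sub>0, g\<^sub>0)\<close>:
  \<open>a\<^sub>1 = \<surd>(4 - x\<^sup>2)\<close> cancels the denominator of the derivative of \<open>arcsin (x/2)\<close>, so after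
  two steps the arcsine and all square roots are gone, and the third and fourth steps
  differentiate away the constants \<open>b\<close>, \<open>c\<close> and \<open>a\<close>.  Hence
  \<open>f\<^sub>4 = -144 p\<^sub>4(x\<^sup>2) / (2 - x\<^sup>2)\<close> and \<open>g\<^sub>4 = -144 q\<^sub>4(x\<^sup>2) / (2 - x\<^sup>2)\<close> for explicit
  polynomials \<open>p\<^sub>4\<close>, \<open>q\<^sub>4\<close>.  Both are positive on \<open>[0,1]\<close>, and so is
  \<open>p\<^sub>4' q\<^sub>4 - p\<^sub>4 q\<^sub>4'\<close>, as becomes evident after expanding in \<open>t = 1 - y\<close>.
\<close>

lemma sqrt_one_minus_half_sq: "sqrt (1 - (x/2)^2) = sqrt (4 - x^2) / 2"
proof -
  have "sqrt (1 - (x/2)^2) = sqrt ((4 - x^2) / 2^2)" by (simp add: field_simps)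
  also have "\<dots> = sqrt (4 - x^2) / 2" by (simp only: real_sqrt_divide real_sqrt_abs)
  finally show ?thesis .
qed

lemma deriv_eq_on_open:
  assumes "(g has_real_derivative D) (at x)" "open S" "x \<in> S" "\<And>y. y \<in> S \<Longrightarrow> f y = g y"
  shows "deriv f x = D"
  by (metis DERIV_imp_deriv assms has_field_derivative_transform_within_open)

lemma fI_Suc_eq:
  assumes "(F has_real_derivative D) (at x)" "\<bar>x\<bar> < 1" "\<And>y. \<bar>y\<bar> < 1 \<Longrightarrow> fI a i y = F y"
  shows "fI a (Suc i) x = acoef (Suc i) x * D"
  using deriv_eq_on_open[OF assms(1) open_greaterThanLessThan, of "-1" 1] assms(2,3)
  by (simp add: abs_less_iff)

lemma gI_Suc_eq:
  assumes "(G has_real_derivative D) (at x)" "\<bar>x\<bar> < 1" "\<And>y. \<bar>y\<bar> < 1 \<Longrightarrow> gI a i y = G y"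
  shows "gI a (Suc i) x = acoef (Suc i) x * D"
  using deriv_eq_on_open[OF assms(1) open_greaterThanLessThan, of "-1" 1] assms(2,3)
  by (simp add: abs_less_iff)

lemma acoef_numeral:
  "acoef 1 x = sqrt (4 - x^2)"
  "acoef 2 x = sqrt (4 - x^2) / (2 - x^2)"
  "acoef 3 x = (2 - x^2)^2 / (50 - 29*x^2 + 9*x^4)"
  "acoef 4 x = (50 - 29*x^2 + 9*x^4)^2 / (2 - x^2)"
  by (simp_all add: numeral_eq_Suc)

lemma quartic_pos: "0 < 50 - 29*x^2 + 9*(x::real)^4"
proof -
  have "50 - 29*x^2 + 9*x^4 = 9*(x^2 - 29/18)^2 + 959/36"
    by (simp add: algebra_simps power2_eq_square power4_eq_xxxx)
  then show ?thesis by (simp add: add_nonneg_pos)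
qed

lemma sq_lt_one: "\<bar>x::real\<bar> < 1 \<Longrightarrow> x^2 < 1"
  by (simp add: abs_square_less_1)

lemma ARE_RT_eq:
  assumes "\<bar>x\<bar> < 1"
  shows "ARE_RT x = fA x / gA x"
proof -
  have "0 < 1 - x^2" using sq_lt_one[OF assms] by simp
  have dR: "deriv muR x = 1"
    unfolding muR_def[abs_def] by (simp add: DERIV_imp_deriv)
  have "(muT has_real_derivative 2 / pi * inverse (sqrt (1 - x^2))) (at x)"
    unfolding muT_def[abs_def] using assms by (auto intro!: derivative_eq_intros)
  then have den: "sigR2 x * (deriv muT x)^2 = 4 * (1 - x^2) / pi^2"
    using \<open>0 < 1 - x^2\<close> unfolding sigR2_def
    by (simp add: DERIV_imp_deriv power_mult_distrib power_divide power_inverse field_simps)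
      (simp add: algebra_simps power2_eq_square power4_eq_xxxx)
  then show ?thesis
    using \<open>0 < 1 - x^2\<close> unfolding ARE_RT_def dR den sigT2_def fA_def gA_def
    by (simp add: field_simps)
qed

lemma has_real_derivative_arcsin_half:
  assumes "\<bar>x\<bar> < 2"
  shows "((\<lambda>y. arcsin (y/2)) has_real_derivative 1 / sqrt (4 - x^2)) (at x)"
proof -
  have "\<bar>x/2\<bar> < 1" using assms by simp
  then have "((\<lambda>y. arcsin (y/2)) has_real_derivative inverse (sqrt (1 - (x/2)^2)) * (1/2)) (at x)"
    by (auto intro!: derivative_eq_intros)
  then show ?thesis by (simp add: sqrt_one_minus_half_sq)
qed

lemma has_real_derivative_sqrt_four_minus_sq:
  assumes "\<bar>x\<bar> < 2"
  shows "((\<lambda>y. sqrt (4 - y^2)) has_real_derivative - x / sqrt (4 - x^2)) (at x)"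
proof -
  have "0 < 4 - x^2" using assms abs_square_less_1[of "x/2"] by (simp add: power_divide)
  then show ?thesis by (auto intro!: derivative_eq_intros simp: field_simps)
qed

lemma fI_1:
  assumes "\<bar>x\<bar> < 1"
  shows "fI a 1 x = -72 * arcsin (x/2)
           - sqrt (4 - x^2) * (-18 * bcoef a * x + 9 * ccoef a * (1 - 3*x^2 + 2*a*x))"
proof -
  define b c where "b = bcoef a" and "c = ccoef a"
  have "\<bar>x\<bar> < 2" using assms by simp
  have "((\<lambda>y. pi^2 - 36 * (arcsin (y/2))^2 - b * (9 * (1 - y^2)) - c * (y - a) * (9 * (1 - y^2)))
      has_real_derivative -72 * arcsin (x/2) / sqrt (4 - x^2) - (-18*b*x + 9*c*(1 - 3*x^2 + 2*a*x))) (at x)"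
    by (rule derivative_eq_intros has_real_derivative_arcsin_half[OF \<open>\<bar>x\<bar> < 2\<close>] refl)+
      (simp add: algebra_simps power2_eq_square)
  then have d: "deriv (f0 a) x = -72 * arcsin (x/2) / sqrt (4 - x^2) - (-18*b*x + 9*c*(1 - 3*x^2 + 2*a*x))"
    by (intro DERIV_imp_deriv) (simp add: f0_def[abs_def] fA_def gA_def b_def c_def)
  have "sqrt (4 - x^2) \<noteq> 0" using sq_lt_one[OF assms] by simp
  then show ?thesis
    unfolding One_nat_def fI.simps acoef.simps d b_def c_def by (simp add: field_simps)
qed

lemma fI_2:
  assumes "\<bar>x\<bar> < 1"
  shows "fI a 2 x = 36 * bcoef a - 9 * ccoef a * (4*a - 9*x) + (63 * ccoef a * x - 72) / (2 - x^2)"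
proof -
  define b c s where "b = bcoef a" and "c = ccoef a" and "s = sqrt (4 - x^2)"
  have "\<bar>x\<bar> < 2" "0 < 2 - x^2" using sq_lt_one[OF assms] assms by simp_all
  then have s: "s * s = 4 - x^2" "0 < s" by (simp_all add: s_def)
  have "((\<lambda>y. -72 * arcsin (y/2) - sqrt (4 - y^2) * (-18*b*y + 9*c*(1 - 3*y^2 + 2*a*y)))
      has_real_derivative -72 * (1/s) - (-x/s * (-18*b*x + 9*c*(1 - 3*x^2 + 2*a*x))
         + s * (-18*b + 9*c*(2*a - 6*x)))) (at x)" (is "(_ has_real_derivative ?D) _")
    unfolding s_def
    by (rule derivative_eq_intros has_real_derivative_arcsin_half[OF \<open>\<bar>x\<bar> < 2\<close>]
        has_real_derivative_sqrt_four_minus_sq[OF \<open>\<bar>x\<bar> < 2\<close>] refl)+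
      (simp add: algebra_simps power2_eq_square)
  from fI_Suc_eq[OF this assms fI_1[of _ a, folded b_def c_def]]
  have "fI a 2 x = s / (2 - x^2) * ?D" by (simp only: Suc_1 acoef_numeral s_def)
  also have "\<dots> = (-72 + x * (-18*b*x + 9*c*(1 - 3*x^2 + 2*a*x))
         - (s * s) * (-18*b + 9*c*(2*a - 6*x))) / (2 - x^2)"
    using s \<open>0 < 2 - x^2\<close> by (simp add: field_simps)
  also have "\<dots> = 36 * b - 9 * c * (4*a - 9*x) + (63 * c * x - 72) / (2 - x^2)"
    using \<open>0 < 2 - x^2\<close> unfolding s(1) by (simp add: divide_simps) (simp add: algebra_simps power2_eq_square)
  finally show ?thesis unfolding b_def c_def .
qed

lemma fI_3:
  assumes "\<bar>x\<bar> < 1"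
  shows "fI a 3 x = 9 * ccoef a - 144 * x / (50 - 29*x^2 + 9*x^4)"
proof -
  define b c where "b = bcoef a" and "c = ccoef a"
  have "0 < 2 - x^2" using sq_lt_one[OF assms] by simp
  have "((\<lambda>y. 36 * b - 9 * c * (4*a - 9*y) + (63 * c * y - 72) / (2 - y^2))
      has_real_derivative 81 * c + (63 * c * (2 - x^2) + (63 * c * x - 72) * (2 * x)) / (2 - x^2)^2) (at x)"
    (is "(_ has_real_derivative ?D) _")
    using \<open>0 < 2 - x^2\<close> by (auto intro!: derivative_eq_intros simp: field_simps power2_eq_square)
  from fI_Suc_eq[OF this assms fI_2[of _ a, folded b_def c_def]]
  have "fI a 3 x = (2 - x^2)^2 / (50 - 29*x^2 + 9*x^4) * ?D"
    by (simp only: Suc_numeral semiring_norm acoef_numeral)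
  also have "\<dots> = 9 * c - 144 * x / (50 - 29*x^2 + 9*x^4)"
    using \<open>0 < 2 - x^2\<close> quartic_pos[of x]
    by (simp add: divide_simps) (simp add: algebra_simps eval_nat_numeral)
  finally show ?thesis unfolding c_def .
qed

definition p4 :: "real \<Rightarrow> real" where
  "p4 y = 50 + 29*y - 27*y^2"

definition q4 :: "real \<Rightarrow> real" where
  "q4 y = 600 - 852*y + 408*y^2 - 102*y^3 + 18*y^4"

lemma fI_4:
  assumes "\<bar>x\<bar> < 1"
  shows "fI a 4 x = -144 * p4 (x^2) / (2 - x^2)"
proof -
  define c where "c = ccoef a"
  define Q where "Q = 50 - 29*x^2 + 9*x^4"
  have "0 < 2 - x^2" "0 < Q" using sq_lt_one[OF assms] quartic_pos[of x] by (simp_all add: Q_def)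
  have "((\<lambda>y. 9 * c - 144 * y / (50 - 29*y^2 + 9*y^4))
      has_real_derivative -144 * (Q - x * (-58*x + 36*x^3)) / Q^2) (at x)"
    (is "(_ has_real_derivative ?D) _")
    using \<open>0 < Q\<close> unfolding Q_def
    by (auto intro!: derivative_eq_intros) (simp add: divide_simps; simp add: algebra_simps eval_nat_numeral)
  from fI_Suc_eq[OF this assms fI_3[of _ a, folded c_def]]
  have "fI a 4 x = Q^2 / (2 - x^2) * ?D"
    by (simp only: Suc_numeral semiring_norm acoef_numeral Q_def)
  also have "\<dots> = -144 * p4 (x^2) / (2 - x^2)"
    using \<open>0 < 2 - x^2\<close> \<open>0 < Q\<close> unfolding p4_def Q_def
    by (simp add: divide_simps) (simp add: algebra_simps eval_nat_numeral)
  finally show ?thesis .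
qed

lemma gI_1:
  shows "gI a 1 x = sqrt (4 - x^2) * (18 * (x - a) * (1 - x^2) - 18 * x * (x - a)^2)"
proof -
  have "((\<lambda>y. (y - a)^2 * (9 * (1 - y^2)))
      has_real_derivative 18 * (x - a) * (1 - x^2) - 18 * x * (x - a)^2) (at x)"
    by (auto intro!: derivative_eq_intros simp: algebra_simps eval_nat_numeral)
  then have "deriv (g0 a) x = 18 * (x - a) * (1 - x^2) - 18 * x * (x - a)^2"
    by (intro DERIV_imp_deriv) (simp add: g0_def[abs_def] gA_def)
  then show ?thesis by simp
qed

lemma gI_2:
  assumes "\<bar>x\<bar> < 1"
  shows "gI a 2 x = (144*x^4 - 162*a*x^3 + (36*a^2 - 468)*x^2 + 450*a*x + 72 - 72*a^2) / (2 - x^2)"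
proof -
  define s where "s = sqrt (4 - x^2)"
  have "\<bar>x\<bar> < 2" "0 < 2 - x^2" using sq_lt_one[OF assms] assms by simp_all
  then have s: "s * s = 4 - x^2" "0 < s" by (simp_all add: s_def)
  have "((\<lambda>y. sqrt (4 - y^2) * (18 * (y - a) * (1 - y^2) - 18 * y * (y - a)^2))
      has_real_derivative -x/s * (18 * (x - a) * (1 - x^2) - 18 * x * (x - a)^2)
         + s * (18 * (1 - x^2) - 72 * x * (x - a) - 18 * (x - a)^2)) (at x)"
    (is "(_ has_real_derivative ?D) _")
    unfolding s_def
    by (rule derivative_eq_intros has_real_derivative_sqrt_four_minus_sq[OF \<open>\<bar>x\<bar> < 2\<close>] refl)+
      (simp add: algebra_simps eval_nat_numeral)
  from gI_Suc_eq[OF this assms gI_1]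
  have "gI a 2 x = s / (2 - x^2) * ?D" by (simp only: Suc_1 acoef_numeral s_def)
  also have "\<dots> = (-x * (18 * (x - a) * (1 - x^2) - 18 * x * (x - a)^2)
         + (s * s) * (18 * (1 - x^2) - 72 * x * (x - a) - 18 * (x - a)^2)) / (2 - x^2)"
    using s \<open>0 < 2 - x^2\<close> by (simp add: field_simps)
  also have "\<dots> = (144*x^4 - 162*a*x^3 + (36*a^2 - 468)*x^2 + 450*a*x + 72 - 72*a^2) / (2 - x^2)"
    unfolding s(1) by (simp add: algebra_simps eval_nat_numeral)
  finally show ?thesis .
qed

lemma gI_3:
  assumes "\<bar>x\<bar> < 1"
  shows "gI a 3 x = 18 * a - 288 * x * (6 - 4*x^2 + x^4) / (50 - 29*x^2 + 9*x^4)"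
proof -
  define L where "L = 144*x^4 - 162*a*x^3 + (36*a^2 - 468)*x^2 + 450*a*x + 72 - 72*a^2"
  have "0 < 2 - x^2" using sq_lt_one[OF assms] by simp
  have "((\<lambda>y. (144*y^4 - 162*a*y^3 + (36*a^2 - 468)*y^2 + 450*a*y + 72 - 72*a^2) / (2 - y^2))
      has_real_derivative ((576*x^3 - 486*a*x^2 + 2*(36*a^2 - 468)*x + 450*a) * (2 - x^2) + L * (2*x))
         / (2 - x^2)^2) (at x)"
    (is "(_ has_real_derivative ?D) _")
    using \<open>0 < 2 - x^2\<close> unfolding L_def
    by (auto intro!: derivative_eq_intros)
      (simp add: divide_simps power2_eq_square; simp add: algebra_simps eval_nat_numeral)
  from gI_Suc_eq[OF this assms gI_2]
  have "gI a 3 x = (2 - x^2)^2 / (50 - 29*x^2 + 9*x^4) * ?D"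
    by (simp only: Suc_numeral semiring_norm acoef_numeral)
  also have "\<dots> = 18 * a - 288 * x * (6 - 4*x^2 + x^4) / (50 - 29*x^2 + 9*x^4)"
    using \<open>0 < 2 - x^2\<close> quartic_pos[of x] unfolding L_def
    by (simp add: divide_simps) (simp add: algebra_simps eval_nat_numeral)
  finally show ?thesis .
qed

lemma gI_4:
  assumes "\<bar>x\<bar> < 1"
  shows "gI a 4 x = -144 * q4 (x^2) / (2 - x^2)"
proof -
  define Q where "Q = 50 - 29*x^2 + 9*x^4"
  have "0 < 2 - x^2" "0 < Q" using sq_lt_one[OF assms] quartic_pos[of x] by (simp_all add: Q_def)
  have "((\<lambda>y. 18 * a - 288 * y * (6 - 4*y^2 + y^4) / (50 - 29*y^2 + 9*y^4))
      has_real_derivative -288 * ((6 - 12*x^2 + 5*x^4) * Q - x * (6 - 4*x^2 + x^4) * (-58*x + 36*x^3))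
         / Q^2) (at x)"
    (is "(_ has_real_derivative ?D) _")
    using \<open>0 < Q\<close> unfolding Q_def
    by (auto intro!: derivative_eq_intros)
      (simp add: divide_simps power2_eq_square; simp add: algebra_simps eval_nat_numeral)
  from gI_Suc_eq[OF this assms gI_3]
  have "gI a 4 x = Q^2 / (2 - x^2) * ?D"
    by (simp only: Suc_numeral semiring_norm acoef_numeral Q_def)
  also have "\<dots> = -144 * q4 (x^2) / (2 - x^2)"
    using \<open>0 < 2 - x^2\<close> \<open>0 < Q\<close> unfolding q4_def Q_def
    by (simp add: divide_simps) (simp add: algebra_simps eval_nat_numeral)
  finally show ?thesis .
qed

lemma p4_pos:
  assumes "0 \<le> y" "y \<le> 1"
  shows "0 < p4 y"
proof -
  have "y^2 \<le> 1" using assms by (simp add: power_le_one)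
  then show ?thesis using assms unfolding p4_def by linarith
qed

lemma q4_pos:
  assumes "y \<le> 1"
  shows "0 < q4 y"
proof -
  define t where "t = 1 - y"
  have "0 \<le> t" using assms by (simp add: t_def)
  have "q4 y = 72 + 270*t + 210*t^2 + 30*t^3 + 18*t^4"
    unfolding q4_def t_def by (simp add: algebra_simps eval_nat_numeral)
  then show ?thesis using \<open>0 \<le> t\<close> by (simp add: add_pos_nonneg)
qed

lemma p4_q4_cross_pos:
  assumes "0 \<le> y" "y \<le> 1"
  shows "0 < (29 - 54*y) * q4 y - p4 y * (-852 + 816*y - 306*y^2 + 72*y^3)"
proof -
  define t where "t = 1 - y"
  have t: "0 \<le> t" "t \<le> 1" using assms by (simp_all add: t_def)
  have "(29 - 54*y) * q4 y - p4 y * (-852 + 816*y - 306*y^2 + 72*y^3)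
      = 12240 + 25728*t + 17220*t^2 + 5244*t^3 + 540*t^4 - 972*t^5"
    unfolding p4_def q4_def t_def by (simp add: algebra_simps eval_nat_numeral)
  moreover have "0 \<le> t^2" "0 \<le> t^3" "0 \<le> t^4" using t by simp_all
  moreover have "t^5 \<le> t^3" using t by (intro power_decreasing) auto
  ultimately show ?thesis using t by linarith
qed

lemma strict_mono_on_p4_div_q4: "strict_mono_on {0..1} (\<lambda>y. p4 y / q4 y)"
proof (rule strict_mono_onI)
  fix r s :: real
  assume "r \<in> {0..1}" "s \<in> {0..1}" "r < s"
  show "p4 r / q4 r < p4 s / q4 s"
  proof (rule DERIV_pos_imp_increasing[OF \<open>r < s\<close>])
    fix y assume "r \<le> y" "y \<le> s"
    with \<open>r \<in> {0..1}\<close> \<open>s \<in> {0..1}\<close> have "0 \<le> y" "y \<le> 1" by auto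
    have "((\<lambda>y. p4 y / q4 y) has_real_derivative
        ((29 - 54*y) * q4 y - p4 y * (-852 + 816*y - 306*y^2 + 72*y^3)) / (q4 y)^2) (at y)"
      using q4_pos[OF \<open>y \<le> 1\<close>] unfolding p4_def q4_def
      by (auto intro!: derivative_eq_intros)
        (simp add: divide_simps power2_eq_square; simp add: algebra_simps eval_nat_numeral)
    moreover have "0 < ((29 - 54*y) * q4 y - p4 y * (-852 + 816*y - 306*y^2 + 72*y^3)) / (q4 y)^2"
      using p4_q4_cross_pos[OF \<open>0 \<le> y\<close> \<open>y \<le> 1\<close>] q4_pos[OF \<open>y \<le> 1\<close>] by simp
    ultimately show "\<exists>D. ((\<lambda>y. p4 y / q4 y) has_real_derivative D) (at y) \<and> 0 < D" by blast
  qed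
qed

lemma rI_4:
  assumes "\<bar>x\<bar> < 1"
  shows "rI a 4 x = p4 (x^2) / q4 (x^2)"
  using assms sq_lt_one[OF assms] by (simp add: rI_def fI_4 gI_4 divide_simps)

theorem lemma2:
  fixes a :: real
  assumes "0 \<le> a" and "a \<le> 1"
  shows "(\<forall>x\<in>{0<..<1}. ARE_RT x = fA x / gA x)
       \<and> strict_mono_on {0<..<1} (rI a 4)
       \<and> (\<forall>x\<in>{0<..<1}. fI a 4 x < 0 \<and> gI a 4 x < 0)"
proof (intro conjI ballI strict_mono_onI)
  fix x :: real
  assume "x \<in> {0<..<1}"
  then have "\<bar>x\<bar> < 1" "0 \<le> x^2" "x^2 \<le> 1" "0 < 2 - x^2"
    using sq_lt_one[of x] by auto
  then show "ARE_RT x = fA x / gA x" "fI a 4 x < 0" "gI a 4 x < 0"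
    using p4_pos q4_pos by (simp_all add: ARE_RT_eq fI_4 gI_4 divide_neg_pos)
next
  fix r s :: real
  assume "r \<in> {0<..<1}" "s \<in> {0<..<1}" "r < s"
  then have "r^2 \<in> {0..1}" "s^2 \<in> {0..1}" "r^2 < s^2"
    by (auto simp: power_le_one power_strict_mono)
  then have "p4 (r^2) / q4 (r^2) < p4 (s^2) / q4 (s^2)"
    using strict_mono_on_p4_div_q4 by (simp add: strict_mono_on_def)
  with \<open>r \<in> {0<..<1}\<close> \<open>s \<in> {0<..<1}\<close> show "rI a 4 r < rI a 4 s"
    by (simp add: rI_4)
qed

end
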